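(* Let $X_1,\dots,X_N$ be independent nonnegative random variables and $\theta>0$. Suppose $\overline{F}_{X_1}(x)=O(x^{-\theta})$ and, for every $2\le j\le N$, there exists $\varphi_j\in\mathfrak{F}$ with $\overline{F}_{X_j}(\varphi_j(x))=O(x^{-\theta})$ and $\mathbb{E}[X_j^\theta]<\infty$. Then $\overline{F}_{\prod_{i=1}^N X_i}(x)=O(x^{-\theta})$.
   Context: $\overline{F}_Y(x)=\Pr(Y>x)$; $f(x)=O(g(x))$ means $\limsup_{x\to\infty}f(x)/g(x)<\infty$. $\mathfrak{F}$ is the class of functions $\varphi:\mathbb{R}_{\ge0}\to\mathbb{R}_{\ge0}$ with $\lim_{x\to\infty}\varphi(x)=\infty$ and $\lim_{x\to\infty}\varphi(x)/x=0$. *)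

theory Defs
  imports "HOL-Probability.Probability" "HOL-Library.Landau_Symbols"
begin

(* The class \<frakF>: functions \<phi> : [0,\<infinity>) \<rightarrow> [0,\<infinity>) with \<phi> x \<rightarrow> \<infinity> and \<phi> x / x \<rightarrow> 0.
   Represented as real \<Rightarrow> real; only values on x \<ge> 0 matter. *)
definition frakF :: "(real \<Rightarrow> real) set" where
  "frakF = {\<phi>. (\<forall>x\<ge>0. \<phi> x \<ge> 0) \<and> filterlim \<phi> at_top at_top
              \<and> ((\<lambda>x. \<phi> x / x) \<longlongrightarrow> 0) at_top}"

definition tail :: "'a measure \<Rightarrow> ('a \<Rightarrow> real) \<Rightarrow> real \<Rightarrow> real" where
  "tail M Y x = measure M {\<omega> \<in> space M. Y \<omega> > x}"

end

theory Submission imports Defs begin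

text \<open>
  Put \<open>Y = X\<^sub>2 \<cdots> X\<^sub>N\<close> and \<open>Z = X\<^sub>1\<close>. Since the tail of \<open>Z\<close> is at most \<open>1\<close>, the hypothesis
  \<open>Pr(Z > t) = O(t\<^sup>-\<^sup>\<theta>)\<close> holds uniformly: \<open>Pr(Z > t) \<le> C t\<^sup>-\<^sup>\<theta>\<close> for all \<open>t > 0\<close>.
  Conditioning on the independent factor \<open>Y\<close> (Fubini on the joint distribution) gives
  \<open>Pr(YZ > x) = E[Pr(Z > x/y)]\<^bsub>y=Y\<^esub> \<le> C x\<^sup>-\<^sup>\<theta> E[Y\<^sup>\<theta>]\<close>, and \<open>E[Y\<^sup>\<theta>] = \<Prod> E[X\<^sub>j\<^sup>\<theta>] < \<infinity>\<close>
  by independence.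
\<close>

context prob_space
begin

lemma tail_bigo_powr_imp_uniform_bound:
  assumes "0 \<le> \<theta>" and "tail M Z \<in> O(\<lambda>x. x powr (-\<theta>))"
  obtains C where "C \<ge> 0" and "\<And>t. t > 0 \<Longrightarrow> tail M Z t \<le> C * t powr (-\<theta>)"
proof -
  have tail_le_1: "tail M Z t \<le> 1" for t
    by (simp add: tail_def)
  obtain c where "c > 0" and "eventually (\<lambda>t. norm (tail M Z t) \<le> c * norm (t powr (-\<theta>))) at_top"
    using assms(2) by (elim landau_o.bigE) auto
  then obtain t0 where t0: "\<And>t. t \<ge> t0 \<Longrightarrow> tail M Z t \<le> c * t powr (-\<theta>)"
    by (auto simp: eventually_at_top_linorder tail_def)
  define t1 where "t1 = max t0 1"
  have "tail M Z t \<le> (c + t1 powr \<theta>) * t powr (-\<theta>)" if "t > 0" for t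
  proof (cases "t \<ge> t1")
    case True
    then have "tail M Z t \<le> c * t powr (-\<theta>)" using t0 by (simp add: t1_def)
    also have "\<dots> \<le> (c + t1 powr \<theta>) * t powr (-\<theta>)" by (intro mult_right_mono) auto
    finally show ?thesis .
  next
    case False
    have "t powr \<theta> \<le> t1 powr \<theta>" using False \<open>t > 0\<close> assms(1) by (intro powr_mono2) auto
    then have "1 \<le> t1 powr \<theta> * t powr (-\<theta>)" using \<open>t > 0\<close> by (simp add: powr_minus field_simps)
    with tail_le_1 have "tail M Z t \<le> t1 powr \<theta> * t powr (-\<theta>)" by (rule order_trans)
    also have "\<dots> \<le> (c + t1 powr \<theta>) * t powr (-\<theta>)" using \<open>c > 0\<close> by (intro mult_right_mono) auto
    finally show ?thesis .
  qed
  moreover have "c + t1 powr \<theta> \<ge> 0" using \<open>c > 0\<close> by simp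
  ultimately show thesis using that by blast
qed

lemma tail_mult_indep_le:
  fixes Y Z :: "'a \<Rightarrow> real"
  assumes indep: "indep_var borel Y borel Z"
    and Y_nonneg: "\<forall>\<omega>\<in>space M. Y \<omega> \<ge> 0" and Z_nonneg: "\<forall>\<omega>\<in>space M. Z \<omega> \<ge> 0"
    and "C \<ge> 0" and tail_Z: "\<And>t. t > 0 \<Longrightarrow> tail M Z t \<le> C * t powr (-\<theta>)"
    and integrable_Y: "integrable M (\<lambda>\<omega>. Y \<omega> powr \<theta>)"
    and "x > 0"
  shows "tail M (\<lambda>\<omega>. Y \<omega> * Z \<omega>) x \<le> C * x powr (-\<theta>) * (\<integral>\<omega>. Y \<omega> powr \<theta> \<partial>M)"
proof -
  have [measurable]: "Y \<in> borel_measurable M" "Z \<in> borel_measurable M"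
    using indep by (auto simp: indep_var_distribution_eq)
  interpret DZ: prob_space "distr M borel Z" by (rule prob_space_distr) simp
  define A where "A = {p \<in> space (borel \<Otimes>\<^sub>M borel). x < (fst p * snd p :: real)}"
  have A_sets [measurable]: "A \<in> sets (borel \<Otimes>\<^sub>M borel)"
    unfolding A_def by measurable
  \<comment> \<open>\<open>y\<close> ranges over all reals; \<open>max y 0\<close> covers \<open>y \<le> 0\<close>, where the section is empty.\<close>
  have section_A: "emeasure (distr M borel Z) (Pair y -` A) \<le> ennreal (C * x powr (-\<theta>) * max y 0 powr \<theta>)"
    for y :: real
  proof -
    have section_eq: "emeasure (distr M borel Z) (Pair y -` A) = emeasure M {\<omega> \<in> space M. x < y * Z \<omega>}"
      by (subst emeasure_distr) (auto simp: A_def space_pair_measure intro!: arg_cong[where f="emeasure M"])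
    show ?thesis
    proof (cases "y > 0")
      case False
      then have "y * Z \<omega> \<le> 0" if "\<omega> \<in> space M" for \<omega>
        using Z_nonneg that by (simp add: mult_nonpos_nonneg)
      then have "{\<omega> \<in> space M. x < y * Z \<omega>} = {}"
        using \<open>x > 0\<close> by force
      then show ?thesis by (simp only: section_eq emeasure_empty zero_le)
    next
      case True
      then have "{\<omega> \<in> space M. x < y * Z \<omega>} = {\<omega> \<in> space M. x / y < Z \<omega>}"
        by (auto simp: field_simps)
      then have "measure M {\<omega> \<in> space M. x < y * Z \<omega>} = tail M Z (x / y)"
        by (simp add: tail_def)
      also have "\<dots> \<le> C * (x / y) powr (-\<theta>)"
        using tail_Z True \<open>x > 0\<close> by simp
      also have "\<dots> = C * x powr (-\<theta>) * max y 0 powr \<theta>"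
        using True \<open>x > 0\<close> by (simp add: powr_divide powr_minus divide_simps)
      finally show ?thesis by (simp add: section_eq emeasure_eq_measure ennreal_leI)
    qed
  qed
  have "emeasure M {\<omega> \<in> space M. x < Y \<omega> * Z \<omega>} = emeasure (distr M (borel \<Otimes>\<^sub>M borel) (\<lambda>\<omega>. (Y \<omega>, Z \<omega>))) A"
    by (subst emeasure_distr[OF _ A_sets]) (auto simp: A_def space_pair_measure intro!: arg_cong[where f="emeasure M"])
  also have "\<dots> = emeasure (distr M borel Y \<Otimes>\<^sub>M distr M borel Z) A"
    using indep by (simp add: indep_var_distribution_eq)
  also have "\<dots> = (\<integral>\<^sup>+y. emeasure (distr M borel Z) (Pair y -` A) \<partial>distr M borel Y)"
    by (rule DZ.emeasure_pair_measure_alt) simp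
  also have "\<dots> \<le> (\<integral>\<^sup>+y. ennreal (C * x powr (-\<theta>) * max y 0 powr \<theta>) \<partial>distr M borel Y)"
    by (intro nn_integral_mono section_A)
  also have "\<dots> = (\<integral>\<^sup>+\<omega>. ennreal (C * x powr (-\<theta>) * Y \<omega> powr \<theta>) \<partial>M)"
    using Y_nonneg by (subst nn_integral_distr) (auto intro!: nn_integral_cong simp: max_def)
  also have "\<dots> = ennreal (C * x powr (-\<theta>) * (\<integral>\<omega>. Y \<omega> powr \<theta> \<partial>M))"
    using integrable_Y \<open>C \<ge> 0\<close> by (subst nn_integral_eq_integral) auto
  finally show ?thesis
    using \<open>C \<ge> 0\<close> by (simp add: tail_def emeasure_eq_measure integral_nonneg_AE)
qed

lemma tail_mult_indep_bigo:
  fixes Y Z :: "'a \<Rightarrow> real"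
  assumes "indep_var borel Y borel Z"
    and "\<forall>\<omega>\<in>space M. Y \<omega> \<ge> 0" and "\<forall>\<omega>\<in>space M. Z \<omega> \<ge> 0"
    and "0 \<le> \<theta>" and "tail M Z \<in> O(\<lambda>x. x powr (-\<theta>))"
    and "integrable M (\<lambda>\<omega>. Y \<omega> powr \<theta>)"
  shows "tail M (\<lambda>\<omega>. Y \<omega> * Z \<omega>) \<in> O(\<lambda>x. x powr (-\<theta>))"
proof -
  obtain C where "C \<ge> 0" and tail_Z: "\<And>t. t > 0 \<Longrightarrow> tail M Z t \<le> C * t powr (-\<theta>)"
    using tail_bigo_powr_imp_uniform_bound assms(4,5) by blast
  define K where "K = C * (\<integral>\<omega>. Y \<omega> powr \<theta> \<partial>M)"
  have "eventually (\<lambda>x. norm (tail M (\<lambda>\<omega>. Y \<omega> * Z \<omega>) x) \<le> K * norm (x powr (-\<theta>))) at_top"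
    using eventually_gt_at_top[of 0]
  proof eventually_elim
    case (elim x)
    have "tail M (\<lambda>\<omega>. Y \<omega> * Z \<omega>) x \<le> K * x powr (-\<theta>)"
      using tail_mult_indep_le[OF assms(1-3) \<open>C \<ge> 0\<close> tail_Z assms(6) elim]
      by (simp add: K_def mult_ac)
    then show ?case by (simp add: tail_def)
  qed
  then show ?thesis by (rule bigoI)
qed

lemma indep_var_prod_single:
  fixes X :: "'i \<Rightarrow> 'a \<Rightarrow> real"
  assumes indep: "indep_vars (\<lambda>_. borel) X I" and "J \<subseteq> I" and "i \<in> I" and "i \<notin> J"
  shows "indep_var borel (\<lambda>\<omega>. \<Prod>j\<in>J. X j \<omega>) borel (X i)"
proof -
  have "indep_var (PiM J (\<lambda>_. borel)) (\<lambda>\<omega>. restrict (\<lambda>j. X j \<omega>) J)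
                  (PiM {i} (\<lambda>_. borel)) (\<lambda>\<omega>. restrict (\<lambda>j. X j \<omega>) {i})"
    using assms by (intro indep_var_restrict[OF indep]) auto
  moreover have "(\<lambda>f. \<Prod>j\<in>J. f j) \<in> borel_measurable (PiM J (\<lambda>_. borel :: real measure))"
    by measurable
  moreover have "(\<lambda>f. f i) \<in> borel_measurable (PiM {i} (\<lambda>_. borel :: real measure))"
    by measurable
  ultimately have "indep_var borel ((\<lambda>f. \<Prod>j\<in>J. f j) \<circ> (\<lambda>\<omega>. restrict (\<lambda>j. X j \<omega>) J))
                             borel ((\<lambda>f. f i) \<circ> (\<lambda>\<omega>. restrict (\<lambda>j. X j \<omega>) {i}))"
    by (rule indep_var_compose)
  then show ?thesis by (simp add: comp_def)
qed

lemma integrable_prod_powr_indep: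
  fixes X :: "'i \<Rightarrow> 'a \<Rightarrow> real"
  assumes indep: "indep_vars (\<lambda>_. borel) X I" and "finite J" and "J \<subseteq> I"
    and "\<And>j. j \<in> J \<Longrightarrow> \<forall>\<omega>\<in>space M. X j \<omega> \<ge> 0"
    and "\<And>j. j \<in> J \<Longrightarrow> integrable M (\<lambda>\<omega>. X j \<omega> powr \<theta>)"
  shows "integrable M (\<lambda>\<omega>. (\<Prod>j\<in>J. X j \<omega>) powr \<theta>)"
proof -
  have "indep_vars (\<lambda>_. borel) (\<lambda>j \<omega>. X j \<omega> powr \<theta>) J"
    by (rule indep_vars_compose2[where X=X and M'="\<lambda>_. borel"])
       (rule indep_vars_subset[OF indep \<open>J \<subseteq> I\<close>], auto)
  then have "integrable M (\<lambda>\<omega>. \<Prod>j\<in>J. X j \<omega> powr \<theta>)"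
    by (rule indep_vars_integrable[OF \<open>finite J\<close>]) (rule assms(5))
  moreover have "(\<Prod>j\<in>J. X j \<omega> powr \<theta>) = (\<Prod>j\<in>J. X j \<omega>) powr \<theta>" if "\<omega> \<in> space M" for \<omega>
    using assms(4) that by (simp add: prod_powr_distrib)
  ultimately show ?thesis
    by (metis (no_types, lifting) Bochner_Integration.integrable_cong)
qed

end

theorem theorem10:
  fixes M :: "'a measure" and X :: "nat \<Rightarrow> 'a \<Rightarrow> real" and N :: nat and \<theta> :: real
  assumes "prob_space M"
    and "N \<ge> 1"
    and "\<And>i. i \<in> {1..N} \<Longrightarrow> X i \<in> borel_measurable M"
    and "prob_space.indep_vars M (\<lambda>_. borel) X {1..N}"
    and "\<And>i. i \<in> {1..N} \<Longrightarrow> \<forall>\<omega>\<in>space M. X i \<omega> \<ge> 0"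
    and "\<theta> > 0"
    and "tail M (X 1) \<in> O(\<lambda>x. x powr (-\<theta>))"
    and "\<And>j. j \<in> {2..N} \<Longrightarrow>
           (\<exists>\<phi>\<in>frakF. (\<lambda>x. tail M (X j) (\<phi> x)) \<in> O(\<lambda>x. x powr (-\<theta>)))"
    and "\<And>j. j \<in> {2..N} \<Longrightarrow> integrable M (\<lambda>\<omega>. X j \<omega> powr \<theta>)"
  shows "tail M (\<lambda>\<omega>. \<Prod>i\<in>{1..N}. X i \<omega>) \<in> O(\<lambda>x. x powr (-\<theta>))"
proof -
  interpret prob_space M by fact
  have split: "{1..N} = insert 1 {2..N}" using \<open>N \<ge> 1\<close> by auto
  have "tail M (\<lambda>\<omega>. (\<Prod>i\<in>{2..N}. X i \<omega>) * X 1 \<omega>) \<in> O(\<lambda>x. x powr (-\<theta>))"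
  proof (rule tail_mult_indep_bigo)
    show "indep_var borel (\<lambda>\<omega>. \<Prod>i\<in>{2..N}. X i \<omega>) borel (X 1)"
      using assms(2,4) by (intro indep_var_prod_single) auto
    show "integrable M (\<lambda>\<omega>. (\<Prod>i\<in>{2..N}. X i \<omega>) powr \<theta>)"
      using assms(4,5,9) by (intro integrable_prod_powr_indep) auto
  qed (use assms(2,5,6,7) in \<open>auto intro: prod_nonneg\<close>)
  then show ?thesis unfolding split by (simp add: mult.commute)
qed

end
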